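(* Let $X$ be a topological space and $K$, $L$ complete non-Archimedean valued fields (not necessarily containing a common subfield, e.g. $\mathbb Q_p$ and $\mathbb Q_l$). Then there exists a unique homeomorphism $\mathrm{BSC}_K(X)\cong\mathrm{BSC}_L(X)$ compatible with the evaluation maps from $X$. In particular, for an extension $K/k$ of complete valued fields, the map $\mathrm{BSC}_K(X)\to\mathrm{BSC}_k(X)$ induced by restriction along the inclusion $C_{bd}(X,k)\hookrightarrow C_{bd}(X,K)$ is a homeomorphism.
   Context: Complete valued fields are fields complete with respect to a non-Archimedean absolute value of rank one (possibly trivial). $C_{bd}(X,k)$ is the $k$-algebra of bounded continuous functions $X\to k$ with the supremum norm. $\mathrm{BSC}_k(X)$ is the Berkovich spectrum of $C_{bd}(X,k)$: bounded multiplicative seminorms on it extending $|\cdot|$ on $k$, with the weakest topology making all $x\mapsto|f|_x$ continuous; the evaluation map is $X\to\mathrm{BSC}_k(X)$, $x\mapsto(f\mapsto|f(x)|)$. *)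

theory Defs
  imports "HOL-Analysis.Analysis"
begin

definition nonarch_abs :: "('k::field \<Rightarrow> real) \<Rightarrow> bool" where
  "nonarch_abs v \<longleftrightarrow>
     (\<forall>x. 0 \<le> v x) \<and> (\<forall>x. v x = 0 \<longleftrightarrow> x = 0) \<and>
     (\<forall>x y. v (x * y) = v x * v y) \<and>
     (\<forall>x y. v (x + y) \<le> max (v x) (v y))"

definition abs_complete :: "('k::field \<Rightarrow> real) \<Rightarrow> bool" where
  "abs_complete v \<longleftrightarrow>
     (\<forall>u::nat \<Rightarrow> 'k. (\<forall>e>0. \<exists>N. \<forall>m\<ge>N. \<forall>n\<ge>N. v (u m - u n) < e) \<longrightarrow>
        (\<exists>l. \<forall>e>0. \<exists>N. \<forall>n\<ge>N. v (u n - l) < e))"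

definition complete_valued_field :: "('k::field \<Rightarrow> real) \<Rightarrow> bool" where
  "complete_valued_field v \<longleftrightarrow> nonarch_abs v \<and> abs_complete v"

text \<open>C_bd(X,k): bounded continuous functions topspace X -> k (k with the topology of v),
  represented as functions that are 0 outside topspace X.\<close>
definition Cbd :: "'a topology \<Rightarrow> ('k::field \<Rightarrow> real) \<Rightarrow> ('a \<Rightarrow> 'k) set" where
  "Cbd X v = {f. (\<forall>x. x \<notin> topspace X \<longrightarrow> f x = 0) \<and>
     (\<forall>x\<in>topspace X. \<forall>e>0. \<exists>U. openin X U \<and> x \<in> U \<and> (\<forall>y\<in>U. v (f y - f x) < e)) \<and>
     (\<exists>B. \<forall>x\<in>topspace X. v (f x) \<le> B)}"

definition const_fun :: "'a topology \<Rightarrow> 'k::field \<Rightarrow> 'a \<Rightarrow> 'k" where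
  "const_fun X c = (\<lambda>x. if x \<in> topspace X then c else 0)"

definition supnorm :: "'a topology \<Rightarrow> ('k::field \<Rightarrow> real) \<Rightarrow> ('a \<Rightarrow> 'k) \<Rightarrow> real" where
  "supnorm X v f = (if topspace X = {} then 0 else (SUP x\<in>topspace X. v (f x)))"

definition BSC :: "'a topology \<Rightarrow> ('k::field \<Rightarrow> real) \<Rightarrow> (('a \<Rightarrow> 'k) \<Rightarrow> real) set" where
  "BSC X v = {s. s \<in> extensional (Cbd X v) \<and>
     (\<forall>f\<in>Cbd X v. 0 \<le> s f) \<and>
     (\<forall>f\<in>Cbd X v. \<forall>g\<in>Cbd X v. s (\<lambda>x. f x + g x) \<le> s f + s g) \<and>
     (\<forall>f\<in>Cbd X v. \<forall>g\<in>Cbd X v. s (\<lambda>x. f x * g x) = s f * s g) \<and>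
     (\<forall>c. s (const_fun X c) = v c) \<and>
     (\<forall>f\<in>Cbd X v. s f \<le> supnorm X v f)}"

definition BSC_top :: "'a topology \<Rightarrow> ('k::field \<Rightarrow> real) \<Rightarrow> (('a \<Rightarrow> 'k) \<Rightarrow> real) topology" where
  "BSC_top X v = subtopology (product_topology (\<lambda>_. euclideanreal) (Cbd X v)) (BSC X v)"

definition eval_map :: "'a topology \<Rightarrow> ('k::field \<Rightarrow> real) \<Rightarrow> 'a \<Rightarrow> (('a \<Rightarrow> 'k) \<Rightarrow> real)" where
  "eval_map X v x = restrict (\<lambda>f. v (f x)) (Cbd X v)"

definition restr_map :: "'a topology \<Rightarrow> ('k::field \<Rightarrow> real) \<Rightarrow> ('k \<Rightarrow> 'K::field)
     \<Rightarrow> (('a \<Rightarrow> 'K) \<Rightarrow> real) \<Rightarrow> (('a \<Rightarrow> 'k) \<Rightarrow> real)" where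
  "restr_map X v \<iota> s = restrict (\<lambda>f. s (\<iota> \<circ> f)) (Cbd X v)"

end

(* For a non-Archimedean absolute value the level sets {x. r \<le> |f x|} of a bounded continuous
   function are clopen. Hence a point s of BSC_k(X) is recovered from the ultrafilter
   U_s = {C clopen. s(1_C) = 1} on the Boolean algebra of clopen subsets of X as
   s(f) = lim_{U_s} |f|, and conversely every clopen ultrafilter defines a point this way.
   Since clopen ultrafilters do not involve k, passing through them gives mutually inverse
   continuous maps BSC_K(X) <-> BSC_L(X) compatible with evaluation. Evaluations are dense and
   the spectra are Hausdorff, which gives uniqueness; restriction along k \<subseteq> K computes the
   same limit, so it is this homeomorphism. *)

theory Submission
  imports Defs
begin

context
  fixes v :: "'k::field \<Rightarrow> real"
  assumes abs_v: "nonarch_abs v"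
begin

lemma nonarch_abs_nonneg [simp]: "0 \<le> v x"
  and nonarch_abs_eq_0_iff [simp]: "v x = 0 \<longleftrightarrow> x = 0"
  and nonarch_abs_mult [simp]: "v (x * y) = v x * v y"
  and nonarch_abs_ultrametric: "v (x + y) \<le> max (v x) (v y)"
  using abs_v unfolding nonarch_abs_def by auto

lemma nonarch_abs_0 [simp]: "v 0 = 0"
  by simp

lemma nonarch_abs_1 [simp]: "v 1 = 1"
  using nonarch_abs_mult[of 1 1] nonarch_abs_eq_0_iff[of 1] by (simp del: nonarch_abs_mult)

lemma nonarch_abs_minus [simp]: "v (- x) = v x"
proof -
  have "v (- 1) * v (- 1) = 1"
    using nonarch_abs_mult[of "- 1" "- 1"] by simp
  then have "v (- 1) = 1"
    using nonarch_abs_nonneg[of "- 1"] by (auto simp: square_eq_1_iff)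
  then show ?thesis
    using nonarch_abs_mult[of "- 1" x] by simp
qed

lemma nonarch_abs_minus_commute: "v (x - y) = v (y - x)"
  by (metis nonarch_abs_minus minus_diff_eq)

lemma nonarch_abs_triangle: "v (x + y) \<le> v x + v y"
proof -
  have "max (v x) (v y) \<le> v x + v y"
    by simp
  then show ?thesis
    using nonarch_abs_ultrametric[of x y] by linarith
qed

lemma nonarch_abs_ge_iff_close: "v (a - b) < r \<Longrightarrow> r \<le> v a \<longleftrightarrow> r \<le> v b"
  using nonarch_abs_ultrametric[of b "a - b"] nonarch_abs_ultrametric[of a "b - a"]
    nonarch_abs_minus_commute[of a b] by auto

lemma nonarch_abs_inverse: "v (inverse x) = inverse (v x)"
proof (cases "x = 0")
  case False
  then have "v x * v (inverse x) = 1"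
    by (metis nonarch_abs_1 nonarch_abs_mult right_inverse)
  then show ?thesis
    by (rule inverse_unique [symmetric])
qed simp

end

section \<open>Bounded continuous functions and their clopen level sets\<close>

lemma CbdI:
  assumes "\<And>x. x \<notin> topspace X \<Longrightarrow> f x = 0"
    and "\<And>x e. x \<in> topspace X \<Longrightarrow> e > 0 \<Longrightarrow> \<exists>U. openin X U \<and> x \<in> U \<and> (\<forall>y\<in>U. v (f y - f x) < e)"
    and "\<And>x. x \<in> topspace X \<Longrightarrow> v (f x) \<le> B"
  shows "f \<in> Cbd X v"
  using assms unfolding Cbd_def by blast

lemma Cbd_zero_outside: "f \<in> Cbd X v \<Longrightarrow> x \<notin> topspace X \<Longrightarrow> f x = 0"
  unfolding Cbd_def by blast

lemma Cbd_continuous: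
  "f \<in> Cbd X v \<Longrightarrow> x \<in> topspace X \<Longrightarrow> e > 0 \<Longrightarrow>
    \<exists>U. openin X U \<and> x \<in> U \<and> (\<forall>y\<in>U. v (f y - f x) < e)"
  unfolding Cbd_def by blast

lemma Cbd_bounded:
  assumes "f \<in> Cbd X v"
  obtains B where "B \<ge> 0" "\<And>x. x \<in> topspace X \<Longrightarrow> v (f x) \<le> B"
proof -
  obtain B where "\<forall>x\<in>topspace X. v (f x) \<le> B"
    using assms unfolding Cbd_def by blast
  then show thesis
    using that[of "max B 0"] by fastforce
qed

lemma supnorm_upper:
  assumes "f \<in> Cbd X v" "x \<in> topspace X"
  shows "v (f x) \<le> supnorm X v f"
proof -
  obtain B where "\<And>x. x \<in> topspace X \<Longrightarrow> v (f x) \<le> B"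
    using Cbd_bounded[OF assms(1)] by blast
  then have "bdd_above ((\<lambda>x. v (f x)) ` topspace X)"
    by (intro bdd_aboveI2)
  then show ?thesis
    using assms(2) by (auto simp: supnorm_def intro: cSUP_upper)
qed

lemma supnorm_least:
  "topspace X \<noteq> {} \<Longrightarrow> (\<And>x. x \<in> topspace X \<Longrightarrow> v (f x) \<le> c) \<Longrightarrow> supnorm X v f \<le> c"
  by (auto simp: supnorm_def intro: cSUP_least)

definition clopens :: "'a topology \<Rightarrow> 'a set set" where
  "clopens X = {C. closedin X C \<and> openin X C}"

lemma clopens_subset_topspace: "C \<in> clopens X \<Longrightarrow> C \<subseteq> topspace X"
  by (simp add: clopens_def openin_subset)

lemma clopens_Diff_topspace: "C \<in> clopens X \<Longrightarrow> topspace X - C \<in> clopens X"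
  unfolding clopens_def by (auto simp: closedin_diff openin_diff)

lemma clopens_Int: "C \<in> clopens X \<Longrightarrow> D \<in> clopens X \<Longrightarrow> C \<inter> D \<in> clopens X"
  and clopens_Un: "C \<in> clopens X \<Longrightarrow> D \<in> clopens X \<Longrightarrow> C \<union> D \<in> clopens X"
  unfolding clopens_def by auto

definition level_set :: "'a topology \<Rightarrow> ('k::field \<Rightarrow> real) \<Rightarrow> ('a \<Rightarrow> 'k) \<Rightarrow> real \<Rightarrow> 'a set" where
  "level_set X v f r = {x \<in> topspace X. r \<le> v (f x)}"

definition level_inverse :: "'a topology \<Rightarrow> ('k::field \<Rightarrow> real) \<Rightarrow> ('a \<Rightarrow> 'k) \<Rightarrow> real \<Rightarrow> 'a \<Rightarrow> 'k" where
  "level_inverse X v f r = (\<lambda>x. if x \<in> level_set X v f r then inverse (f x) else 0)"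

context
  fixes X :: "'a topology" and v :: "'k::field \<Rightarrow> real"
  assumes abs_v: "nonarch_abs v"
begin

lemma const_fun_in_Cbd: "const_fun X c \<in> Cbd X v"
  by (rule CbdI[where B = "v c"])
    (auto simp: const_fun_def abs_v intro!: exI[of _ "topspace X"])

lemma indicator_in_Cbd:
  assumes C: "C \<in> clopens X"
  shows "(indicator C :: 'a \<Rightarrow> 'k) \<in> Cbd X v"
proof (rule CbdI[where B = 1])
  fix x and e :: real
  assume x: "x \<in> topspace X" and e: "e > 0"
  show "\<exists>U. openin X U \<and> x \<in> U \<and> (\<forall>y\<in>U. v (indicator C y - indicator C x :: 'k) < e)"
  proof (cases "x \<in> C")
    case True
    then show ?thesis
      using C e by (intro exI[of _ C]) (auto simp: abs_v clopens_def)
  next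
    case False
    then show ?thesis
      using C e x by (intro exI[of _ "topspace X - C"]) (auto simp: abs_v clopens_def closedin_def)
  qed
qed (use clopens_subset_topspace[OF C] abs_v in \<open>auto simp: indicator_def\<close>)

lemma add_in_Cbd:
  assumes f: "f \<in> Cbd X v" and g: "g \<in> Cbd X v"
  shows "(\<lambda>x. f x + g x) \<in> Cbd X v"
proof -
  obtain Bf Bg where Bf: "\<And>x. x \<in> topspace X \<Longrightarrow> v (f x) \<le> Bf"
    and Bg: "\<And>x. x \<in> topspace X \<Longrightarrow> v (g x) \<le> Bg"
    by (metis Cbd_bounded f g)
  show ?thesis
  proof (rule CbdI[where B = "max Bf Bg"])
    fix x and e :: real
    assume x: "x \<in> topspace X" and e: "e > 0"
    obtain U1 where U1: "openin X U1" "x \<in> U1" "\<forall>y\<in>U1. v (f y - f x) < e"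
      using Cbd_continuous[OF f x e] by blast
    obtain U2 where U2: "openin X U2" "x \<in> U2" "\<forall>y\<in>U2. v (g y - g x) < e"
      using Cbd_continuous[OF g x e] by blast
    have "v (f y + g y - (f x + g x)) < e" if "y \<in> U1 \<inter> U2" for y
    proof -
      have "v (f y + g y - (f x + g x)) \<le> max (v (f y - f x)) (v (g y - g x))"
        using nonarch_abs_ultrametric[OF abs_v, of "f y - f x" "g y - g x"]
        by (simp add: algebra_simps)
      also have "\<dots> < e"
        using U1 U2 that by simp
      finally show ?thesis .
    qed
    then show "\<exists>U. openin X U \<and> x \<in> U \<and> (\<forall>y\<in>U. v (f y + g y - (f x + g x)) < e)"
      using U1 U2 by blast
  next
    fix x
    assume "x \<in> topspace X"
    then show "v (f x + g x) \<le> max Bf Bg"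
      using Bf Bg nonarch_abs_ultrametric[OF abs_v, of "f x" "g x"] by fastforce
  qed (simp add: Cbd_zero_outside[OF f] Cbd_zero_outside[OF g])
qed

lemma mult_in_Cbd:
  assumes f: "f \<in> Cbd X v" and g: "g \<in> Cbd X v"
  shows "(\<lambda>x. f x * g x) \<in> Cbd X v"
proof -
  obtain Bf Bg where Bf: "Bf \<ge> 0" "\<And>x. x \<in> topspace X \<Longrightarrow> v (f x) \<le> Bf"
    and Bg: "Bg \<ge> 0" "\<And>x. x \<in> topspace X \<Longrightarrow> v (g x) \<le> Bg"
    by (metis Cbd_bounded f g)
  show ?thesis
  proof (rule CbdI[where B = "Bf * Bg"])
    fix x and e :: real
    assume x: "x \<in> topspace X" and e: "e > 0"
    have Bf1: "Bf + 1 > 0" and Bg1: "Bg + 1 > 0"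
      using Bf Bg by auto
    obtain U1 where U1: "openin X U1" "x \<in> U1" "\<forall>y\<in>U1. v (f y - f x) < e / (Bg + 1)"
      using Cbd_continuous[OF f x] e Bg1 by (meson divide_pos_pos)
    obtain U2 where U2: "openin X U2" "x \<in> U2" "\<forall>y\<in>U2. v (g y - g x) < e / (Bf + 1)"
      using Cbd_continuous[OF g x] e Bf1 by (meson divide_pos_pos)
    have "v (f y * g y - f x * g x) < e" if y: "y \<in> U1 \<inter> U2" for y
    proof -
      have yX: "y \<in> topspace X"
        using y U1(1) openin_subset by blast
      have "v (f y) * v (g y - g x) \<le> (Bf + 1) * v (g y - g x)"
        using Bf(2)[OF yX] abs_v by (intro mult_right_mono) auto
      also have "\<dots> < e"
        using U2 y Bf1 by (simp add: pos_less_divide_eq mult.commute)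
      finally have 1: "v (f y) * v (g y - g x) < e" .
      have "v (f y - f x) * v (g x) \<le> v (f y - f x) * (Bg + 1)"
        using Bg(2)[OF x] abs_v by (intro mult_left_mono) auto
      also have "\<dots> < e"
        using U1 y Bg1 by (simp add: pos_less_divide_eq)
      finally have 2: "v (f y - f x) * v (g x) < e" .
      have "f y * g y - f x * g x = f y * (g y - g x) + (f y - f x) * g x"
        by (simp add: algebra_simps)
      then have "v (f y * g y - f x * g x) \<le> max (v (f y) * v (g y - g x)) (v (f y - f x) * v (g x))"
        using nonarch_abs_ultrametric[OF abs_v, of "f y * (g y - g x)" "(f y - f x) * g x"]
        by (simp only: nonarch_abs_mult[OF abs_v])
      then show ?thesis
        using 1 2 by linarith
    qed
    then show "\<exists>U. openin X U \<and> x \<in> U \<and> (\<forall>y\<in>U. v (f y * g y - f x * g x) < e)"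
      using U1 U2 by blast
  next
    fix x
    assume "x \<in> topspace X"
    then show "v (f x * g x) \<le> Bf * Bg"
      using Bf Bg by (simp add: abs_v mult_mono)
  qed (simp add: Cbd_zero_outside[OF f])
qed

text \<open>The non-Archimedean property enters here: \<open>\<bar>f\<bar>\<close> is locally constant away from its zeros.\<close>

lemma level_set_clopen:
  assumes f: "f \<in> Cbd X v" and r: "r > 0"
  shows "level_set X v f r \<in> clopens X"
proof -
  define L where "L = level_set X v f r"
  have L_locally_constant: "\<exists>U. openin X U \<and> x \<in> U \<and> (\<forall>y\<in>U. y \<in> L \<longleftrightarrow> x \<in> L)"
    if x: "x \<in> topspace X" for x
  proof -
    obtain U where U: "openin X U" "x \<in> U" "\<forall>y\<in>U. v (f y - f x) < r"
      using Cbd_continuous[OF f x r] by blast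
    have "y \<in> L \<longleftrightarrow> x \<in> L" if "y \<in> U" for y
      using that x openin_subset[OF U(1)] nonarch_abs_ge_iff_close[OF abs_v, of "f y" "f x" r] U(3)
      by (auto simp: L_def level_set_def)
    then show ?thesis
      using U by blast
  qed
  have "L \<subseteq> topspace X"
    by (auto simp: L_def level_set_def)
  moreover have "openin X L"
  proof (subst openin_subopen, intro ballI)
    fix x
    assume x: "x \<in> L"
    then obtain U where "openin X U" "x \<in> U" "\<forall>y\<in>U. y \<in> L \<longleftrightarrow> x \<in> L"
      using L_locally_constant \<open>L \<subseteq> topspace X\<close> by blast
    then show "\<exists>U. openin X U \<and> x \<in> U \<and> U \<subseteq> L"
      using x by blast
  qed
  moreover have "openin X (topspace X - L)"
  proof (subst openin_subopen, intro ballI)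
    fix x
    assume x: "x \<in> topspace X - L"
    then obtain U where "openin X U" "x \<in> U" "\<forall>y\<in>U. y \<in> L \<longleftrightarrow> x \<in> L"
      using L_locally_constant by blast
    then show "\<exists>U. openin X U \<and> x \<in> U \<and> U \<subseteq> topspace X - L"
      using x openin_subset by blast
  qed
  ultimately show ?thesis
    by (simp add: L_def clopens_def closedin_def)
qed

lemma level_inverse_bound:
  assumes r: "r > 0"
  shows "v (level_inverse X v f r x) \<le> 1 / r"
proof (cases "x \<in> level_set X v f r")
  case True
  then have "v (level_inverse X v f r x) = inverse (v (f x))"
    by (simp add: level_inverse_def nonarch_abs_inverse[OF abs_v])
  also have "\<dots> \<le> inverse r"
    using True r by (intro le_imp_inverse_le) (simp_all add: level_set_def)
  finally show ?thesis
    by (simp add: inverse_eq_divide)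
qed (use r in \<open>simp add: level_inverse_def abs_v\<close>)

lemma mult_level_inverse:
  assumes r: "r > 0"
  shows "(\<lambda>x. f x * level_inverse X v f r x) = indicator (level_set X v f r)"
proof
  fix x
  have "f x \<noteq> 0" if "x \<in> level_set X v f r"
    using that r abs_v by (auto simp: level_set_def)
  then show "f x * level_inverse X v f r x = indicator (level_set X v f r) x"
    by (simp add: level_inverse_def indicator_def)
qed

lemma level_inverse_in_Cbd:
  assumes f: "f \<in> Cbd X v" and r: "r > 0"
  shows "level_inverse X v f r \<in> Cbd X v"
proof (rule CbdI[where B = "1 / r"])
  define L where "L = level_set X v f r"
  have L: "L \<in> clopens X"
    unfolding L_def using f r by (rule level_set_clopen)
  fix x and e :: real
  assume x: "x \<in> topspace X" and e: "e > 0"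
  show "\<exists>U. openin X U \<and> x \<in> U \<and> (\<forall>y\<in>U. v (level_inverse X v f r y - level_inverse X v f r x) < e)"
  proof (cases "x \<in> L")
    case False
    then show ?thesis
      using L e x abs_v
      by (intro exI[of _ "topspace X - L"]) (auto simp: level_inverse_def L_def clopens_def closedin_def)
  next
    case True
    obtain U where U: "openin X U" "x \<in> U" "\<forall>y\<in>U. v (f y - f x) < e * r * r"
      using Cbd_continuous[OF f x] e r by (meson mult_pos_pos)
    have "v (level_inverse X v f r y - level_inverse X v f r x) < e" if y: "y \<in> U \<inter> L" for y
    proof -
      have ry: "r \<le> v (f y)" and rx: "r \<le> v (f x)" and nz: "f y \<noteq> 0" "f x \<noteq> 0"
        using y True r abs_v by (auto simp: L_def level_set_def)
      have "level_inverse X v f r y - level_inverse X v f r x = - (inverse (f y) * (f y - f x) * inverse (f x))"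
        using y True nz by (simp add: level_inverse_def L_def inverse_diff_inverse)
      then have "v (level_inverse X v f r y - level_inverse X v f r x)
          = inverse (v (f y)) * v (f y - f x) * inverse (v (f x))"
        by (simp add: abs_v nonarch_abs_inverse[OF abs_v])
      also have "\<dots> \<le> (1 / r) * v (f y - f x) * (1 / r)"
        using ry rx r abs_v by (intro mult_mono) (auto simp: inverse_eq_divide frac_le)
      also have "\<dots> < (1 / r) * (e * r * r) * (1 / r)"
        using U y r by (intro mult_strict_right_mono mult_strict_left_mono) auto
      also have "\<dots> = e"
        using r by simp
      finally show ?thesis .
    qed
    moreover have "openin X (U \<inter> L)"
      using U L by (auto simp: clopens_def)
    ultimately show ?thesis
      using U True by blast
  qed
qed (simp add: level_inverse_def level_set_def, rule level_inverse_bound[OF r])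

end

section \<open>Seminorms from ultrafilters of clopen sets\<close>

definition clopen_ultrafilter :: "'a topology \<Rightarrow> 'a set set \<Rightarrow> bool" where
  "clopen_ultrafilter X U \<longleftrightarrow> U \<subseteq> clopens X \<and> topspace X \<in> U \<and> {} \<notin> U \<and>
     (\<forall>C\<in>U. \<forall>D\<in>U. C \<inter> D \<in> U) \<and> (\<forall>C\<in>U. \<forall>D\<in>clopens X. C \<subseteq> D \<longrightarrow> D \<in> U) \<and>
     (\<forall>C\<in>clopens X. C \<in> U \<or> topspace X - C \<in> U)"

lemma
  assumes "clopen_ultrafilter X U"
  shows clopen_ultrafilter_subset: "U \<subseteq> clopens X"
    and clopen_ultrafilter_topspace: "topspace X \<in> U"
    and clopen_ultrafilter_empty: "{} \<notin> U"
    and clopen_ultrafilter_Int: "C \<in> U \<Longrightarrow> D \<in> U \<Longrightarrow> C \<inter> D \<in> U"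
    and clopen_ultrafilter_mono: "C \<in> U \<Longrightarrow> D \<in> clopens X \<Longrightarrow> C \<subseteq> D \<Longrightarrow> D \<in> U"
    and clopen_ultrafilter_Diff: "C \<in> clopens X \<Longrightarrow> C \<notin> U \<Longrightarrow> topspace X - C \<in> U"
  using assms unfolding clopen_ultrafilter_def by blast+

lemma clopen_ultrafilter_UnD:
  assumes U: "clopen_ultrafilter X U" and C: "C \<in> clopens X" and D: "D \<in> clopens X"
    and CD: "C \<union> D \<in> U"
  shows "C \<in> U \<or> D \<in> U"
proof (rule ccontr)
  assume "\<not> (C \<in> U \<or> D \<in> U)"
  then have "(topspace X - C) \<inter> (topspace X - D) \<inter> (C \<union> D) \<in> U"
    using clopen_ultrafilter_Diff[OF U] clopen_ultrafilter_Int[OF U] C D CD by meson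
  moreover have "(topspace X - C) \<inter> (topspace X - D) \<inter> (C \<union> D) = {}"
    by blast
  ultimately show False
    using clopen_ultrafilter_empty[OF U] by simp
qed

lemma clopen_ultrafilter_INT:
  assumes U: "clopen_ultrafilter X U" and "finite F" and "\<forall>i\<in>F. D i \<in> U"
  shows "topspace X \<inter> \<Inter>(D ` F) \<in> U"
  using assms(2,3)
proof (induction F)
  case empty
  then show ?case
    using clopen_ultrafilter_topspace[OF U] by simp
next
  case (insert i F)
  have "topspace X \<inter> \<Inter>(D ` insert i F) = (topspace X \<inter> \<Inter>(D ` F)) \<inter> D i"
    by auto
  then show ?case
    using insert clopen_ultrafilter_Int[OF U] by simp
qed

text \<open>\<open>abs_limit X v U f t\<close> says that \<open>t = lim\<^sub>U \<bar>f\<bar>\<close>, phrased through the clopen level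
  sets: \<open>{\<bar>f\<bar> \<ge> r} \<in> U\<close> holds for \<open>r < t\<close> and fails for \<open>r > t\<close>.\<close>

definition abs_limit :: "'a topology \<Rightarrow> ('k::field \<Rightarrow> real) \<Rightarrow> 'a set set \<Rightarrow> ('a \<Rightarrow> 'k) \<Rightarrow> real \<Rightarrow> bool"
  where "abs_limit X v U f t \<longleftrightarrow> 0 \<le> t \<and>
    (\<forall>r>0. (level_set X v f r \<in> U \<longrightarrow> r \<le> t) \<and> (level_set X v f r \<notin> U \<longrightarrow> t \<le> r))"

lemma
  assumes "abs_limit X v U f t"
  shows abs_limit_nonneg: "0 \<le> t"
    and abs_limit_lower: "r > 0 \<Longrightarrow> level_set X v f r \<in> U \<Longrightarrow> r \<le> t"
    and abs_limit_upper: "r > 0 \<Longrightarrow> level_set X v f r \<notin> U \<Longrightarrow> t \<le> r"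
  using assms unfolding abs_limit_def by blast+

lemma abs_limit_gt_iff:
  assumes "abs_limit X v U f t" "0 \<le> a"
  shows "a < t \<longleftrightarrow> (\<exists>r>0. a < r \<and> level_set X v f r \<in> U)"
proof
  assume "a < t"
  then have "(a + t) / 2 > 0" "a < (a + t) / 2" "(a + t) / 2 < t"
    using assms(2) by auto
  then show "\<exists>r>0. a < r \<and> level_set X v f r \<in> U"
    using assms(1) unfolding abs_limit_def by (meson not_le)
qed (use assms(1) in \<open>force simp: abs_limit_def\<close>)

lemma abs_limit_lt_iff:
  assumes "abs_limit X v U f t"
  shows "t < a \<longleftrightarrow> (\<exists>r>0. r < a \<and> level_set X v f r \<notin> U)"
proof
  assume "t < a"
  then have "(a + t) / 2 > 0" "(a + t) / 2 < a" "t < (a + t) / 2"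
    using assms by (auto simp: abs_limit_def)
  then show "\<exists>r>0. r < a \<and> level_set X v f r \<notin> U"
    using assms unfolding abs_limit_def by (meson not_le)
qed (use assms in \<open>force simp: abs_limit_def\<close>)

lemma abs_limit_unique:
  assumes "abs_limit X v U f t" "abs_limit X v U f t'"
  shows "t = t'"
proof -
  have "\<not> t < t'" if lim: "abs_limit X v U f t" and lim': "abs_limit X v U f t'" for t t'
  proof
    assume "t < t'"
    then obtain r where "r > 0" "r < t'" "level_set X v f r \<notin> U"
      using abs_limit_lt_iff[OF lim] by blast
    then show False
      using lim' by (force simp: abs_limit_def)
  qed
  then show ?thesis
    using assms by (meson linorder_neqE_linordered_idom)
qed

definition seminorm_of_ultrafilter
  :: "'a topology \<Rightarrow> ('k::field \<Rightarrow> real) \<Rightarrow> 'a set set \<Rightarrow> ('a \<Rightarrow> 'k) \<Rightarrow> real" where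
  "seminorm_of_ultrafilter X v U = restrict (\<lambda>f. THE t. abs_limit X v U f t) (Cbd X v)"

definition ultrafilter_of_seminorm :: "'a topology \<Rightarrow> (('a \<Rightarrow> 'k::field) \<Rightarrow> real) \<Rightarrow> 'a set set" where
  "ultrafilter_of_seminorm X s = {C \<in> clopens X. s (indicator C) = 1}"

lemma seminorm_of_ultrafilter_eq:
  "f \<in> Cbd X v \<Longrightarrow> abs_limit X v U f t \<Longrightarrow> seminorm_of_ultrafilter X v U f = t"
  unfolding seminorm_of_ultrafilter_def by (simp add: the_equality abs_limit_unique)

lemma exists_factors_above_mult_less:
  fixes a b r :: real
  assumes "a * b < r"
  obtains a' b' where "a < a'" "b < b'" "a' * b' < r"
proof -
  have "((\<lambda>d. (a + d) * (b + d)) \<longlongrightarrow> a * b) (at_right 0)"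
    by (auto intro!: tendsto_eq_intros)
  then have "\<forall>\<^sub>F d in at_right 0. (a + d) * (b + d) < r \<and> 0 < d"
    using order_tendstoD(2)[OF _ assms] eventually_at_right_less eventually_conj by blast
  then obtain d where "(a + d) * (b + d) < r" "0 < d"
    using eventually_happens'[of "at_right (0::real)"] by auto
  then show thesis
    using that[of "a + d" "b + d"] by simp
qed

lemma exists_factors_below_mult_greater:
  fixes a b r :: real
  assumes "0 < r" "r < a * b" "0 \<le> a" "0 \<le> b"
  obtains a' b' where "0 < a'" "a' < a" "0 < b'" "b' < b" "r < a' * b'"
proof -
  have "0 < a" "0 < b"
    using assms by (auto simp: zero_less_mult_iff order_le_less)
  have "((\<lambda>d. (a - d) * (b - d)) \<longlongrightarrow> a * b) (at_right 0)"
    by (auto intro!: tendsto_eq_intros)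
  then have "\<forall>\<^sub>F d in at_right 0. r < (a - d) * (b - d) \<and> d \<in> {0<..<min a b}"
    using order_tendstoD(1)[OF _ assms(2)] eventually_at_right_real[of 0 "min a b"]
      \<open>0 < a\<close> \<open>0 < b\<close> by (intro eventually_conj) auto
  then obtain d where "r < (a - d) * (b - d)" "d \<in> {0<..<min a b}"
    using eventually_happens'[of "at_right (0::real)"] by auto
  then show thesis
    using that[of "a - d" "b - d"] by simp
qed

context
  fixes X :: "'a topology" and v :: "'k::field \<Rightarrow> real" and U :: "'a set set"
  assumes abs_v: "nonarch_abs v" and U: "clopen_ultrafilter X U"
begin

lemma abs_limit_exists:
  assumes f: "f \<in> Cbd X v"
  shows "\<exists>t. abs_limit X v U f t"
proof -
  obtain B where B: "B \<ge> 0" "\<And>x. x \<in> topspace X \<Longrightarrow> v (f x) \<le> B"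
    using Cbd_bounded[OF f] by blast
  define S where "S = insert 0 {r. r > 0 \<and> level_set X v f r \<in> U}"
  have "r \<le> B" if "r > 0" "level_set X v f r \<in> U" for r
  proof -
    have "level_set X v f r \<noteq> {}"
      using that clopen_ultrafilter_empty[OF U] by auto
    then obtain x where "x \<in> topspace X" "r \<le> v (f x)"
      by (auto simp: level_set_def)
    then show ?thesis
      using B(2) by force
  qed
  then have bdd: "bdd_above S"
    using B(1) by (auto simp: S_def intro: bdd_aboveI[of _ B])
  have "Sup S \<le> r" if r: "r > 0" "level_set X v f r \<notin> U" for r
  proof (rule cSup_least)
    fix s
    assume "s \<in> S"
    moreover have "level_set X v f s \<notin> U" if "r < s"
      using that r clopen_ultrafilter_mono[OF U _ level_set_clopen[OF abs_v f r(1)]]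
      by (force simp: level_set_def)
    ultimately show "s \<le> r"
      using r by (force simp: S_def)
  qed (simp add: S_def)
  then have "abs_limit X v U f (Sup S)"
    unfolding abs_limit_def using bdd by (auto intro: cSup_upper simp: S_def)
  then show ?thesis ..
qed

lemma abs_limit_seminorm_of_ultrafilter:
  assumes f: "f \<in> Cbd X v"
  shows "abs_limit X v U f (seminorm_of_ultrafilter X v U f)"
proof -
  obtain t where "abs_limit X v U f t"
    using abs_limit_exists[OF f] ..
  then show ?thesis
    using seminorm_of_ultrafilter_eq[OF f] by simp
qed

lemma abs_limit_add_le:
  assumes f: "f \<in> Cbd X v" and g: "g \<in> Cbd X v"
    and lim_f: "abs_limit X v U f a" and lim_g: "abs_limit X v U g b"
    and lim_fg: "abs_limit X v U (\<lambda>x. f x + g x) c"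
  shows "c \<le> max a b"
proof (rule ccontr)
  have "0 \<le> max a b"
    using lim_f by (auto simp: abs_limit_def)
  moreover assume "\<not> c \<le> max a b"
  ultimately obtain r where r: "r > 0" "max a b < r" "level_set X v (\<lambda>x. f x + g x) r \<in> U"
    using abs_limit_gt_iff[OF lim_fg] not_le by blast
  have Lf: "level_set X v f r \<in> clopens X" and Lg: "level_set X v g r \<in> clopens X"
    using level_set_clopen[OF abs_v] f g r(1) by auto
  have "level_set X v (\<lambda>x. f x + g x) r \<subseteq> level_set X v f r \<union> level_set X v g r"
  proof
    fix x
    assume "x \<in> level_set X v (\<lambda>x. f x + g x) r"
    moreover have "v (f x + g x) \<le> max (v (f x)) (v (g x))"
      by (rule nonarch_abs_ultrametric[OF abs_v])
    ultimately show "x \<in> level_set X v f r \<union> level_set X v g r"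
      by (auto simp: level_set_def max_def split: if_splits)
  qed
  then have "level_set X v f r \<union> level_set X v g r \<in> U"
    using clopen_ultrafilter_mono[OF U r(3)] clopens_Un[OF Lf Lg] by blast
  then have "level_set X v f r \<in> U \<or> level_set X v g r \<in> U"
    using clopen_ultrafilter_UnD[OF U Lf Lg] by blast
  then show False
    using abs_limit_lower[OF lim_f r(1)] abs_limit_lower[OF lim_g r(1)] r(2) by auto
qed

lemma abs_limit_mult_lower:
  assumes lim_f: "abs_limit X v U f a" and lim_g: "abs_limit X v U g b"
    and r: "r > 0" and inU: "level_set X v (\<lambda>x. f x * g x) r \<in> U"
    and f: "f \<in> Cbd X v" and g: "g \<in> Cbd X v"
  shows "r \<le> a * b"
proof (rule ccontr)
  assume "\<not> r \<le> a * b"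
  then obtain a' b' where ab': "a < a'" "b < b'" "a' * b' < r"
    using exists_factors_above_mult_less by (metis not_le)
  then have a': "a' > 0" and b': "b' > 0"
    using abs_limit_nonneg[OF lim_f] abs_limit_nonneg[OF lim_g] by auto
  have "level_set X v f a' \<notin> U" "level_set X v g b' \<notin> U"
    using abs_limit_lower[OF lim_f a'] abs_limit_lower[OF lim_g b'] ab' by auto
  then have "topspace X - level_set X v f a' \<in> U" "topspace X - level_set X v g b' \<in> U"
    using clopen_ultrafilter_Diff[OF U] level_set_clopen[OF abs_v] f g a' b' by blast+
  then have "(topspace X - level_set X v f a') \<inter> (topspace X - level_set X v g b')
      \<inter> level_set X v (\<lambda>x. f x * g x) r \<in> U"
    using clopen_ultrafilter_Int[OF U] inU by blast
  moreover have "v (f x) * v (g x) < r" if "v (f x) < a'" "v (g x) < b'" for x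
  proof -
    have "v (f x) * v (g x) \<le> v (f x) * b'"
      using that abs_v by (intro mult_left_mono) auto
    also have "\<dots> < a' * b'"
      using that b' by (intro mult_strict_right_mono) auto
    finally show ?thesis
      using ab'(3) by linarith
  qed
  then have "(topspace X - level_set X v f a') \<inter> (topspace X - level_set X v g b')
      \<inter> level_set X v (\<lambda>x. f x * g x) r = {}"
    by (auto simp: level_set_def abs_v) (meson not_le)
  ultimately show False
    using clopen_ultrafilter_empty[OF U] by simp
qed

lemma abs_limit_mult_upper:
  assumes lim_f: "abs_limit X v U f a" and lim_g: "abs_limit X v U g b"
    and r: "r > 0" and notU: "level_set X v (\<lambda>x. f x * g x) r \<notin> U"
    and f: "f \<in> Cbd X v" and g: "g \<in> Cbd X v"
  shows "a * b \<le> r"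
proof (rule ccontr)
  assume "\<not> a * b \<le> r"
  then obtain a' b' where ab': "0 < a'" "a' < a" "0 < b'" "b' < b" "r < a' * b'"
    using exists_factors_below_mult_greater[OF r _ abs_limit_nonneg[OF lim_f] abs_limit_nonneg[OF lim_g]]
    by (metis not_le)
  then have "level_set X v f a' \<in> U" "level_set X v g b' \<in> U"
    using abs_limit_upper[OF lim_f] abs_limit_upper[OF lim_g] by (meson not_le)+
  then have "level_set X v f a' \<inter> level_set X v g b' \<in> U"
    using clopen_ultrafilter_Int[OF U] by blast
  moreover have "level_set X v f a' \<inter> level_set X v g b' \<subseteq> level_set X v (\<lambda>x. f x * g x) r"
  proof
    fix x
    assume x: "x \<in> level_set X v f a' \<inter> level_set X v g b'"
    then have "a' * b' \<le> v (f x) * v (g x)"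
      using ab' by (intro mult_mono) (auto simp: level_set_def)
    then show "x \<in> level_set X v (\<lambda>x. f x * g x) r"
      using x ab'(5) by (auto simp: level_set_def abs_v)
  qed
  moreover have "level_set X v (\<lambda>x. f x * g x) r \<in> clopens X"
    using level_set_clopen[OF abs_v mult_in_Cbd[OF abs_v f g] r] .
  ultimately show False
    using notU clopen_ultrafilter_mono[OF U] by blast
qed

lemma abs_limit_mult:
  assumes "f \<in> Cbd X v" "g \<in> Cbd X v" "abs_limit X v U f a" "abs_limit X v U g b"
  shows "abs_limit X v U (\<lambda>x. f x * g x) (a * b)"
  using abs_limit_mult_lower[OF assms(3,4) _ _ assms(1,2)] abs_limit_mult_upper[OF assms(3,4) _ _ assms(1,2)]
    abs_limit_nonneg[OF assms(3)] abs_limit_nonneg[OF assms(4)]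
  by (simp add: abs_limit_def)

lemma abs_limit_const: "abs_limit X v U (const_fun X c) (v c)"
proof -
  have L: "level_set X v (const_fun X c) r = (if r \<le> v c then topspace X else {})" for r
    by (auto simp: level_set_def const_fun_def)
  show ?thesis
    unfolding abs_limit_def L
    using clopen_ultrafilter_empty[OF U] clopen_ultrafilter_topspace[OF U] abs_v by auto
qed

lemma abs_limit_le_supnorm:
  assumes f: "f \<in> Cbd X v" and lim: "abs_limit X v U f t"
  shows "t \<le> supnorm X v f"
proof (rule ccontr)
  obtain x where x: "x \<in> topspace X"
    using clopen_ultrafilter_topspace[OF U] clopen_ultrafilter_empty[OF U] by fastforce
  have "0 \<le> supnorm X v f"
    using supnorm_upper[OF f x] nonarch_abs_nonneg[OF abs_v, of "f x"] by linarith
  moreover assume "\<not> t \<le> supnorm X v f"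
  ultimately obtain r where "supnorm X v f < r" "level_set X v f r \<in> U"
    using abs_limit_gt_iff[OF lim] not_le by blast
  moreover have "level_set X v f r = {}" if "supnorm X v f < r"
    using supnorm_upper[OF f] that by (force simp: level_set_def)
  ultimately show False
    using clopen_ultrafilter_empty[OF U] by simp
qed

lemma seminorm_of_ultrafilter_in_BSC: "seminorm_of_ultrafilter X v U \<in> BSC X v"
proof -
  let ?s = "seminorm_of_ultrafilter X v U"
  note lim = abs_limit_seminorm_of_ultrafilter
  have add: "?s (\<lambda>x. f x + g x) \<le> ?s f + ?s g" if f: "f \<in> Cbd X v" and g: "g \<in> Cbd X v" for f g
  proof -
    have "?s (\<lambda>x. f x + g x) \<le> max (?s f) (?s g)"
      using abs_limit_add_le[OF f g lim[OF f] lim[OF g] lim[OF add_in_Cbd[OF abs_v f g]]] .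
    also have "\<dots> \<le> ?s f + ?s g"
      using abs_limit_nonneg[OF lim[OF f]] abs_limit_nonneg[OF lim[OF g]] by simp
    finally show ?thesis .
  qed
  have mult: "?s (\<lambda>x. f x * g x) = ?s f * ?s g" if f: "f \<in> Cbd X v" and g: "g \<in> Cbd X v" for f g
    using seminorm_of_ultrafilter_eq[OF mult_in_Cbd[OF abs_v f g] abs_limit_mult[OF f g lim[OF f] lim[OF g]]] .
  have const: "?s (const_fun X c) = v c" for c
    using seminorm_of_ultrafilter_eq[OF const_fun_in_Cbd[OF abs_v] abs_limit_const] .
  have nonneg: "0 \<le> ?s f" and bounded: "?s f \<le> supnorm X v f" if f: "f \<in> Cbd X v" for f
    using abs_limit_nonneg[OF lim[OF f]] abs_limit_le_supnorm[OF f lim[OF f]] by simp_all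
  have ext: "?s \<in> extensional (Cbd X v)"
    by (simp add: seminorm_of_ultrafilter_def)
  show ?thesis
    unfolding BSC_def mem_Collect_eq
    by (intro conjI ballI allI ext add mult const nonneg bounded)
qed

lemma abs_limit_approx:
  assumes f: "f \<in> Cbd X v" and lim: "abs_limit X v U f t" and e: "e > 0"
  obtains D where "D \<in> U" "\<And>x. x \<in> D \<Longrightarrow> \<bar>v (f x) - t\<bar> < e"
proof -
  have t: "0 \<le> t"
    using abs_limit_nonneg[OF lim] .
  have "level_set X v f (t + e / 2) \<notin> U"
  proof
    assume "level_set X v f (t + e / 2) \<in> U"
    moreover have "t + e / 2 > 0"
      using t e by simp
    ultimately have "t + e / 2 \<le> t"
      using abs_limit_lower[OF lim] by blast
    then show False
      using e by simp
  qed
  then have upper: "topspace X - level_set X v f (t + e / 2) \<in> U"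
    using clopen_ultrafilter_Diff[OF U] level_set_clopen[OF abs_v f] t e by simp
  obtain D where D: "D \<in> U" "\<And>x. x \<in> D \<Longrightarrow> t - e / 2 \<le> v (f x)"
  proof (cases "t - e / 2 > 0")
    case True
    have "level_set X v f (t - e / 2) \<in> U"
    proof (rule ccontr)
      assume "level_set X v f (t - e / 2) \<notin> U"
      then have "t \<le> t - e / 2"
        by (rule abs_limit_upper[OF lim True])
      then show False
        using e by simp
    qed
    then show thesis
      using that by (auto simp: level_set_def)
  next
    case False
    have "t - e / 2 \<le> v (f x)" for x
      using False nonarch_abs_nonneg[OF abs_v, of "f x"] by linarith
    then show thesis
      using that[of "topspace X"] clopen_ultrafilter_topspace[OF U] by blast
  qed
  show thesis
  proof (rule that)
    show "(topspace X - level_set X v f (t + e / 2)) \<inter> D \<in> U"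
      using clopen_ultrafilter_Int[OF U upper D(1)] .
    fix x
    assume x: "x \<in> (topspace X - level_set X v f (t + e / 2)) \<inter> D"
    then have "v (f x) < t + e / 2" "t - e / 2 \<le> v (f x)"
      using D(2) by (auto simp: level_set_def)
    then show "\<bar>v (f x) - t\<bar> < e"
      using e by linarith
  qed
qed

lemma ultrafilter_of_seminorm_of_ultrafilter:
  "ultrafilter_of_seminorm X (seminorm_of_ultrafilter X v U) = U"
proof -
  have "abs_limit X v U (indicator C) (if C \<in> U then 1 else 0)" if C: "C \<in> clopens X" for C
  proof -
    have "level_set X v (indicator C) r = (if r \<le> 1 then C else {})" if "r > 0" for r
      using clopens_subset_topspace[OF C] that abs_v by (auto simp: level_set_def indicator_def)
    then show ?thesis
      using clopen_ultrafilter_empty[OF U] by (auto simp: abs_limit_def)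
  qed
  then have "seminorm_of_ultrafilter X v U (indicator C) = (if C \<in> U then 1 else 0)"
    if "C \<in> clopens X" for C
    using seminorm_of_ultrafilter_eq[OF indicator_in_Cbd[OF abs_v that]] that by blast
  then show ?thesis
    using clopen_ultrafilter_subset[OF U] by (auto simp: ultrafilter_of_seminorm_def split: if_splits)
qed

end

section \<open>Ultrafilters from seminorms\<close>

lemma
  assumes "s \<in> BSC X v"
  shows BSC_extensional: "s \<in> extensional (Cbd X v)"
    and BSC_nonneg: "f \<in> Cbd X v \<Longrightarrow> 0 \<le> s f"
    and BSC_add_le: "f \<in> Cbd X v \<Longrightarrow> g \<in> Cbd X v \<Longrightarrow> s (\<lambda>x. f x + g x) \<le> s f + s g"
    and BSC_mult: "f \<in> Cbd X v \<Longrightarrow> g \<in> Cbd X v \<Longrightarrow> s (\<lambda>x. f x * g x) = s f * s g"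
    and BSC_const: "s (const_fun X c) = v c"
    and BSC_le_supnorm: "f \<in> Cbd X v \<Longrightarrow> s f \<le> supnorm X v f"
  using assms unfolding BSC_def by blast+

context
  fixes X :: "'a topology" and v :: "'k::field \<Rightarrow> real" and s :: "('a \<Rightarrow> 'k) \<Rightarrow> real"
  assumes abs_v: "nonarch_abs v" and s: "s \<in> BSC X v"
begin

lemma BSC_topspace_nonempty: "topspace X \<noteq> {}"
proof
  assume "topspace X = {}"
  then have "const_fun X (0 :: 'k) = const_fun X 1"
    by (simp add: const_fun_def)
  then show False
    using BSC_const[OF s, of 0] BSC_const[OF s, of 1] abs_v by simp
qed

lemma BSC_indicator_eq_0_or_1:
  assumes C: "C \<in> clopens X"
  shows "s (indicator C) = 0 \<or> s (indicator C) = 1"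
proof -
  have "s (indicator C) = s (indicator C) * s (indicator C)"
    using BSC_mult[OF s indicator_in_Cbd[OF abs_v C] indicator_in_Cbd[OF abs_v C]]
    by (simp add: indicator_inter_arith[symmetric])
  then show ?thesis
    by (metis mult_cancel_left1)
qed

lemma clopen_ultrafilter_of_seminorm: "clopen_ultrafilter X (ultrafilter_of_seminorm X s)"
proof -
  let ?U = "ultrafilter_of_seminorm X s"
  have ind: "indicator C \<in> Cbd X v" if "C \<in> clopens X" for C
    using indicator_in_Cbd[OF abs_v that] .
  have "indicator (topspace X) = (const_fun X 1 :: 'a \<Rightarrow> 'k)" "indicator {} = (const_fun X 0 :: 'a \<Rightarrow> 'k)"
    by (auto simp: const_fun_def fun_eq_iff)
  then have "topspace X \<in> ?U" "{} \<notin> ?U"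
    using BSC_const[OF s, of 1] BSC_const[OF s, of 0] abs_v
    by (auto simp: ultrafilter_of_seminorm_def clopens_def)
  moreover have "C \<inter> D \<in> ?U" if "C \<in> ?U" "D \<in> ?U" for C D
    using that BSC_mult[OF s ind ind, of C D] clopens_Int
    by (auto simp: ultrafilter_of_seminorm_def indicator_inter_arith[symmetric])
  moreover have "D \<in> ?U" if C: "C \<in> ?U" and D: "D \<in> clopens X" and "C \<subseteq> D" for C D
  proof -
    have "indicator (C \<inter> D) = (indicator C :: 'a \<Rightarrow> 'k)"
      using \<open>C \<subseteq> D\<close> by (simp add: Int_absorb2)
    then have "s (indicator C) = s (indicator C) * s (indicator D)"
      using C D BSC_mult[OF s ind ind, of C D]
      by (simp add: ultrafilter_of_seminorm_def indicator_inter_arith[symmetric])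
    then show ?thesis
      using C D by (simp add: ultrafilter_of_seminorm_def)
  qed
  moreover have "C \<in> ?U \<or> topspace X - C \<in> ?U" if C: "C \<in> clopens X" for C
  proof -
    have C': "topspace X - C \<in> clopens X"
      using clopens_Diff_topspace[OF C] .
    have "(\<lambda>x. indicator C x + indicator (topspace X - C) x) = (const_fun X 1 :: 'a \<Rightarrow> 'k)"
      using clopens_subset_topspace[OF C] by (auto simp: indicator_def const_fun_def fun_eq_iff)
    then have "1 \<le> s (indicator C) + s (indicator (topspace X - C))"
      using BSC_add_le[OF s ind[OF C] ind[OF C']] BSC_const[OF s, of 1] abs_v by simp
    then show ?thesis
      using BSC_indicator_eq_0_or_1[OF C] BSC_indicator_eq_0_or_1[OF C'] C C'
      by (auto simp: ultrafilter_of_seminorm_def)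
  qed
  ultimately show ?thesis
    unfolding clopen_ultrafilter_def by (auto simp: ultrafilter_of_seminorm_def)
qed

text \<open>On \<open>{\<bar>f\<bar> \<ge> r}\<close> the function \<open>f\<close> has an inverse of sup-norm at most \<open>1/r\<close>.\<close>

lemma BSC_ge_if_level_set_in:
  assumes f: "f \<in> Cbd X v" and r: "r > 0"
    and L: "level_set X v f r \<in> ultrafilter_of_seminorm X s"
  shows "r \<le> s f"
proof -
  let ?g = "level_inverse X v f r"
  have g: "?g \<in> Cbd X v"
    using level_inverse_in_Cbd[OF abs_v f r] .
  have "s f * s ?g = 1"
    using BSC_mult[OF s f g] L by (simp add: mult_level_inverse[OF abs_v r] ultrafilter_of_seminorm_def)
  moreover have "s ?g \<le> 1 / r"
    using BSC_le_supnorm[OF s g] supnorm_least[of X v ?g "1 / r", OF BSC_topspace_nonempty level_inverse_bound[OF abs_v r]]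
    by linarith
  then have "s f * s ?g \<le> s f * (1 / r)"
    using BSC_nonneg[OF s f] by (rule mult_left_mono)
  ultimately show ?thesis
    using r by (simp add: field_simps)
qed

lemma BSC_le_if_level_set_notin:
  assumes f: "f \<in> Cbd X v" and r: "r > 0"
    and L: "level_set X v f r \<notin> ultrafilter_of_seminorm X s"
  shows "s f \<le> r"
proof -
  define M where "M = topspace X - level_set X v f r"
  have M: "M \<in> clopens X" and "M \<in> ultrafilter_of_seminorm X s"
    using level_set_clopen[OF abs_v f r] L clopen_ultrafilter_Diff[OF clopen_ultrafilter_of_seminorm]
    by (auto simp: M_def clopens_Diff_topspace)
  then have "s (\<lambda>x. f x * indicator M x) = s f"
    using BSC_mult[OF s f indicator_in_Cbd[OF abs_v M]] by (simp add: ultrafilter_of_seminorm_def)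
  moreover have "supnorm X v (\<lambda>x. f x * indicator M x) \<le> r"
    using r abs_v by (intro supnorm_least[OF BSC_topspace_nonempty])
      (auto simp: indicator_def M_def level_set_def)
  ultimately show ?thesis
    using BSC_le_supnorm[OF s mult_in_Cbd[OF abs_v f indicator_in_Cbd[OF abs_v M]]] by linarith
qed

lemma abs_limit_BSC: "f \<in> Cbd X v \<Longrightarrow> abs_limit X v (ultrafilter_of_seminorm X s) f (s f)"
  unfolding abs_limit_def
  using BSC_nonneg[OF s] BSC_ge_if_level_set_in BSC_le_if_level_set_notin by blast

lemma seminorm_of_ultrafilter_of_seminorm: "seminorm_of_ultrafilter X v (ultrafilter_of_seminorm X s) = s"
proof (rule extensionalityI[of _ "Cbd X v"])
  fix f
  assume f: "f \<in> Cbd X v"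
  then show "seminorm_of_ultrafilter X v (ultrafilter_of_seminorm X s) f = s f"
    by (rule seminorm_of_ultrafilter_eq[OF f abs_limit_BSC])
qed (simp_all add: seminorm_of_ultrafilter_def BSC_extensional[OF s])

end

section \<open>The topology of the spectrum\<close>

lemma topspace_BSC_top [simp]: "topspace (BSC_top X v) = BSC X v"
  unfolding BSC_top_def by (auto simp: BSC_def PiE_def Pi_def)

lemma continuous_map_BSC_top_apply:
  "f \<in> Cbd X v \<Longrightarrow> continuous_map (BSC_top X v) euclideanreal (\<lambda>s. s f)"
  unfolding BSC_top_def by (intro continuous_map_from_subtopology continuous_map_product_projection)

lemma continuous_map_into_BSC_top:
  assumes "h \<in> topspace T \<rightarrow> BSC X v"
    and "\<And>f. f \<in> Cbd X v \<Longrightarrow> continuous_map T euclideanreal (\<lambda>t. h t f)"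
  shows "continuous_map T (BSC_top X v) h"
  using assms BSC_extensional
  unfolding BSC_top_def continuous_map_in_subtopology continuous_map_componentwise by blast

lemma Hausdorff_space_BSC_top: "Hausdorff_space (BSC_top X v)"
  unfolding BSC_top_def
  by (intro Hausdorff_space_subtopology Hausdorff_space_product_topology[THEN iffD2]) simp

context
  fixes X :: "'a topology" and v :: "'k::field \<Rightarrow> real"
  assumes abs_v: "nonarch_abs v"
begin

lemma
  assumes C: "C \<in> clopens X"
  shows openin_BSC_top_ultrafilter_mem:
      "openin (BSC_top X v) {s \<in> BSC X v. C \<in> ultrafilter_of_seminorm X s}"
    and openin_BSC_top_ultrafilter_not_mem:
      "openin (BSC_top X v) {s \<in> BSC X v. C \<notin> ultrafilter_of_seminorm X s}"
proof -
  have cont: "continuous_map (BSC_top X v) euclideanreal (\<lambda>s. s (indicator C))"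
    using continuous_map_BSC_top_apply[OF indicator_in_Cbd[OF abs_v C]] .
  have "{s \<in> BSC X v. C \<in> ultrafilter_of_seminorm X s} =
      {s \<in> topspace (BSC_top X v). s (indicator C) \<in> {1/2<..}}"
    and "{s \<in> BSC X v. C \<notin> ultrafilter_of_seminorm X s} =
      {s \<in> topspace (BSC_top X v). s (indicator C) \<in> {..<1/2}}"
    using C by (auto simp: ultrafilter_of_seminorm_def dest: BSC_indicator_eq_0_or_1[OF abs_v _ C])
  then show "openin (BSC_top X v) {s \<in> BSC X v. C \<in> ultrafilter_of_seminorm X s}"
    and "openin (BSC_top X v) {s \<in> BSC X v. C \<notin> ultrafilter_of_seminorm X s}"
    using openin_continuous_map_preimage[OF cont, of "{1/2<..}"]
      openin_continuous_map_preimage[OF cont, of "{..<1/2}"] by simp_all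
qed

lemma continuous_map_seminorm_of_ultrafilter:
  assumes ultra: "\<And>t. t \<in> topspace T \<Longrightarrow> clopen_ultrafilter X (F t)"
    and mem: "\<And>C. C \<in> clopens X \<Longrightarrow> openin T {t \<in> topspace T. C \<in> F t}"
    and not_mem: "\<And>C. C \<in> clopens X \<Longrightarrow> openin T {t \<in> topspace T. C \<notin> F t}"
  shows "continuous_map T (BSC_top X v) (\<lambda>t. seminorm_of_ultrafilter X v (F t))"
proof (rule continuous_map_into_BSC_top)
  show "(\<lambda>t. seminorm_of_ultrafilter X v (F t)) \<in> topspace T \<rightarrow> BSC X v"
    using seminorm_of_ultrafilter_in_BSC[OF abs_v ultra] by blast
  fix g
  assume g: "g \<in> Cbd X v"
  let ?h = "\<lambda>t. seminorm_of_ultrafilter X v (F t) g"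
  have lim: "abs_limit X v (F t) g (?h t)" if "t \<in> topspace T" for t
    using abs_limit_seminorm_of_ultrafilter[OF abs_v ultra[OF that] g] .
  have L: "level_set X v g r \<in> clopens X" if "r > 0" for r
    using level_set_clopen[OF abs_v g that] .
  have "openin T {t \<in> topspace T. a < ?h t}" for a
  proof (cases "a < 0")
    case True
    then have "{t \<in> topspace T. a < ?h t} = topspace T"
      using abs_limit_nonneg[OF lim] by fastforce
    then show ?thesis
      by simp
  next
    case False
    then have "{t \<in> topspace T. a < ?h t} =
        (\<Union>r\<in>{r. 0 < r \<and> a < r}. {t \<in> topspace T. level_set X v g r \<in> F t})"
      using abs_limit_gt_iff[OF lim] by (auto; metis le_less_trans not_less)
    then show ?thesis
      using mem L by (auto intro!: openin_Union)
  qed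
  moreover have "openin T {t \<in> topspace T. ?h t < a}" for a
  proof -
    have "{t \<in> topspace T. ?h t < a} =
        (\<Union>r\<in>{r. 0 < r \<and> r < a}. {t \<in> topspace T. level_set X v g r \<notin> F t})"
      using abs_limit_lt_iff[OF lim] by auto
    then show ?thesis
      using not_mem L by (auto intro!: openin_Union)
  qed
  ultimately show "continuous_map T euclideanreal ?h"
    unfolding continuous_map_upper_lower_semicontinuous_lt by blast
qed

lemma eval_map_in_BSC:
  assumes x: "x \<in> topspace X"
  shows "eval_map X v x \<in> BSC X v"
proof -
  have "eval_map X v x (const_fun X c) = v c" for c
    using const_fun_in_Cbd[OF abs_v, of X c] x by (simp add: eval_map_def const_fun_def)
  then show ?thesis
    using supnorm_upper[OF _ x] add_in_Cbd[OF abs_v, where X = X] mult_in_Cbd[OF abs_v, where X = X]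
      nonarch_abs_triangle[OF abs_v] abs_v
    by (auto simp: BSC_def eval_map_def)
qed

lemma ultrafilter_of_seminorm_eval_map:
  "x \<in> topspace X \<Longrightarrow> ultrafilter_of_seminorm X (eval_map X v x) = {C \<in> clopens X. x \<in> C}"
  using indicator_in_Cbd[OF abs_v] abs_v
  by (auto simp: ultrafilter_of_seminorm_def eval_map_def indicator_def)

lemma seminorm_of_ultrafilter_principal:
  assumes x: "x \<in> topspace X"
  shows "seminorm_of_ultrafilter X v {C \<in> clopens X. x \<in> C} = eval_map X v x"
proof (rule extensionalityI[of _ "Cbd X v"])
  fix g
  assume g: "g \<in> Cbd X v"
  have "abs_limit X v {C \<in> clopens X. x \<in> C} g (v (g x))"
    using level_set_clopen[OF abs_v g] x abs_v by (auto simp: abs_limit_def level_set_def)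
  then show "seminorm_of_ultrafilter X v {C \<in> clopens X. x \<in> C} g = eval_map X v x g"
    using seminorm_of_ultrafilter_eq[OF g] g by (simp add: eval_map_def)
qed (simp_all add: seminorm_of_ultrafilter_def eval_map_def)

lemma BSC_approx_by_eval_map:
  assumes s: "s \<in> BSC X v" and F: "finite F" "F \<subseteq> Cbd X v"
    and V: "\<And>f. f \<in> F \<Longrightarrow> open (V f)" "\<And>f. f \<in> F \<Longrightarrow> s f \<in> V f"
  obtains x where "x \<in> topspace X" "\<And>f. f \<in> F \<Longrightarrow> v (f x) \<in> V f"
proof -
  let ?U = "ultrafilter_of_seminorm X s"
  have U: "clopen_ultrafilter X ?U"
    using clopen_ultrafilter_of_seminorm[OF abs_v s] .
  have "\<exists>D. D \<in> ?U \<and> (\<forall>x\<in>D. v (f x) \<in> V f)" if f: "f \<in> F" for f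
  proof -
    obtain e where e: "e > 0" "ball (s f) e \<subseteq> V f"
      using V f open_contains_ball by blast
    obtain D where D: "D \<in> ?U" "\<And>x. x \<in> D \<Longrightarrow> \<bar>v (f x) - s f\<bar> < e"
      using abs_limit_approx[OF abs_v U _ abs_limit_BSC[OF abs_v s] e(1)] f F(2) by blast
    have "v (f x) \<in> V f" if "x \<in> D" for x
      using D(2)[OF that] e(2) by (auto simp: dist_real_def abs_minus_commute)
    then show ?thesis
      using D(1) by blast
  qed
  then obtain D where D: "\<forall>f\<in>F. D f \<in> ?U \<and> (\<forall>x\<in>D f. v (f x) \<in> V f)"
    by (metis bchoice)
  have "topspace X \<inter> \<Inter>(D ` F) \<in> ?U"
    using clopen_ultrafilter_INT[OF U F(1), of D] D by blast
  then have "topspace X \<inter> \<Inter>(D ` F) \<noteq> {}"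
    using clopen_ultrafilter_empty[OF U] by metis
  then show thesis
    using that D by blast
qed

lemma BSC_in_closure_of_eval_map:
  assumes s: "s \<in> BSC X v"
  shows "s \<in> BSC_top X v closure_of (eval_map X v ` topspace X)"
  unfolding in_closure_of
proof (intro conjI allI impI)
  show "s \<in> topspace (BSC_top X v)"
    using s by simp
  fix W
  assume "s \<in> W \<and> openin (BSC_top X v) W"
  then obtain W' where W': "openin (product_topology (\<lambda>_. euclideanreal) (Cbd X v)) W'"
      "W = W' \<inter> BSC X v" "s \<in> W'"
    unfolding BSC_top_def openin_subtopology by blast
  then obtain V where V: "finite {f \<in> Cbd X v. V f \<noteq> UNIV}"
      "\<And>f. f \<in> Cbd X v \<Longrightarrow> open (V f)" "s \<in> Pi\<^sub>E (Cbd X v) V" "Pi\<^sub>E (Cbd X v) V \<subseteq> W'"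
    unfolding openin_product_topology_alt by auto
  define F where "F = {f \<in> Cbd X v. V f \<noteq> UNIV}"
  obtain x where x: "x \<in> topspace X" "\<And>f. f \<in> F \<Longrightarrow> v (f x) \<in> V f"
    using BSC_approx_by_eval_map[OF s, of F V] V by (auto simp: F_def)
  have "eval_map X v x \<in> Pi\<^sub>E (Cbd X v) V"
  proof (rule PiE_I)
    fix f
    assume f: "f \<in> Cbd X v"
    show "eval_map X v x f \<in> V f"
      using x(2)[of f] f by (cases "f \<in> F") (auto simp: eval_map_def F_def)
  qed (simp add: eval_map_def)
  then have "eval_map X v x \<in> W"
    using V(4) W'(2) eval_map_in_BSC[OF x(1)] by blast
  then show "\<exists>y. y \<in> eval_map X v ` topspace X \<and> y \<in> W"
    using x(1) by blast
qed

end

section \<open>Independence of the coefficient field\<close>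

definition BSC_transfer :: "'a topology \<Rightarrow> ('l::field \<Rightarrow> real) \<Rightarrow> (('a \<Rightarrow> 'k::field) \<Rightarrow> real)
    \<Rightarrow> (('a \<Rightarrow> 'l) \<Rightarrow> real)" where
  "BSC_transfer X w s = seminorm_of_ultrafilter X w (ultrafilter_of_seminorm X s)"

context
  fixes X :: "'a topology" and v :: "'k::field \<Rightarrow> real" and w :: "'l::field \<Rightarrow> real"
  assumes abs_v: "nonarch_abs v" and abs_w: "nonarch_abs w"
begin

lemma BSC_transfer_inverse:
  assumes s: "s \<in> BSC X v"
  shows "BSC_transfer X v (BSC_transfer X w s) = s"
proof -
  have "ultrafilter_of_seminorm X (BSC_transfer X w s) = ultrafilter_of_seminorm X s"
    unfolding BSC_transfer_def
    using ultrafilter_of_seminorm_of_ultrafilter[OF abs_w clopen_ultrafilter_of_seminorm[OF abs_v s]] .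
  then show ?thesis
    using seminorm_of_ultrafilter_of_seminorm[OF abs_v s] by (simp add: BSC_transfer_def)
qed

lemma continuous_map_BSC_transfer: "continuous_map (BSC_top X v) (BSC_top X w) (BSC_transfer X w)"
  unfolding BSC_transfer_def
  using clopen_ultrafilter_of_seminorm[OF abs_v] openin_BSC_top_ultrafilter_mem[OF abs_v]
    openin_BSC_top_ultrafilter_not_mem[OF abs_v]
  by (intro continuous_map_seminorm_of_ultrafilter[OF abs_w]) simp_all

lemma BSC_transfer_eval_map:
  "x \<in> topspace X \<Longrightarrow> BSC_transfer X w (eval_map X v x) = eval_map X w x"
  by (simp add: BSC_transfer_def ultrafilter_of_seminorm_eval_map[OF abs_v]
      seminorm_of_ultrafilter_principal[OF abs_w])

lemma BSC_transfer_unique: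
  assumes h: "continuous_map (BSC_top X v) (BSC_top X w) h"
    and h_eval: "\<And>x. x \<in> topspace X \<Longrightarrow> h (eval_map X v x) = eval_map X w x"
    and s: "s \<in> BSC X v"
  shows "h s = BSC_transfer X w s"
  using BSC_in_closure_of_eval_map[OF abs_v s] Hausdorff_space_BSC_top h continuous_map_BSC_transfer
  by (rule forall_in_closure_of_eq) (auto simp: h_eval BSC_transfer_eval_map)

end

lemma homeomorphic_map_BSC_transfer:
  assumes "nonarch_abs v" "nonarch_abs w"
  shows "homeomorphic_map (BSC_top X v) (BSC_top X w) (BSC_transfer X w)"
proof -
  have "homeomorphic_maps (BSC_top X v) (BSC_top X w) (BSC_transfer X w) (BSC_transfer X v)"
    using continuous_map_BSC_transfer[OF assms] continuous_map_BSC_transfer[OF assms(2,1)]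
      BSC_transfer_inverse[OF assms] BSC_transfer_inverse[OF assms(2,1)]
    by (auto simp: homeomorphic_maps_def)
  then show ?thesis
    using homeomorphic_maps_map by blast
qed

lemma comp_in_Cbd:
  assumes add: "\<And>a b. \<iota> (a + b) = \<iota> a + \<iota> b" and isometric: "\<And>a. w (\<iota> a) = v a"
    and f: "f \<in> Cbd X v"
  shows "\<iota> \<circ> f \<in> Cbd X w"
proof -
  have "\<iota> 0 = 0"
    using add[of 0 0] by (metis add.right_neutral add_left_cancel)
  moreover have "\<iota> (a - b) = \<iota> a - \<iota> b" for a b
    using add[of "a - b" b] by (simp add: eq_diff_eq)
  moreover obtain B where "\<And>x. x \<in> topspace X \<Longrightarrow> v (f x) \<le> B"
    using Cbd_bounded[OF f] by blast
  ultimately show ?thesis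
    using Cbd_zero_outside[OF f] Cbd_continuous[OF f]
    by (intro CbdI[where B = B]) (simp_all add: isometric flip: \<open>\<And>a b. \<iota> (a - b) = \<iota> a - \<iota> b\<close>)
qed

lemma restr_map_eq_BSC_transfer:
  assumes abs_w: "nonarch_abs w"
    and add: "\<And>a b. \<iota> (a + b) = \<iota> a + \<iota> b" and isometric: "\<And>a. w (\<iota> a) = v a"
    and s: "s \<in> BSC X w"
  shows "restr_map X v \<iota> s = BSC_transfer X v s"
proof (rule extensionalityI[of _ "Cbd X v"])
  fix f
  assume f: "f \<in> Cbd X v"
  have "level_set X w (\<iota> \<circ> f) r = level_set X v f r" for r
    by (simp add: level_set_def isometric)
  then have "abs_limit X v (ultrafilter_of_seminorm X s) f (s (\<iota> \<circ> f))"
    using abs_limit_BSC[OF abs_w s comp_in_Cbd[OF add isometric f]] by (simp add: abs_limit_def)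
  then show "restr_map X v \<iota> s f = BSC_transfer X v s f"
    using f by (simp add: restr_map_def BSC_transfer_def seminorm_of_ultrafilter_eq)
qed (simp_all add: restr_map_def BSC_transfer_def seminorm_of_ultrafilter_def)

lemma homeomorphic_map_restr_map:
  assumes "nonarch_abs w" "nonarch_abs v"
    and "\<And>a b. \<iota> (a + b) = \<iota> a + \<iota> b" and "\<And>a. w (\<iota> a) = v a"
  shows "homeomorphic_map (BSC_top X w) (BSC_top X v) (restr_map X v \<iota>)"
  by (rule homeomorphic_map_eq[OF homeomorphic_map_BSC_transfer[OF assms(1,2)]])
    (simp add: restr_map_eq_BSC_transfer[OF assms(1,3,4)])

theorem mainTheorem17:
  fixes X :: "'a topology"
    and vK :: "'K::field \<Rightarrow> real" and vL :: "'L::field \<Rightarrow> real"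
  assumes "complete_valued_field vK" and "complete_valued_field vL"
  shows "(\<exists>h. homeomorphic_map (BSC_top X vK) (BSC_top X vL) h \<and>
            (\<forall>x\<in>topspace X. h (eval_map X vK x) = eval_map X vL x) \<and>
            (\<forall>h'. homeomorphic_map (BSC_top X vK) (BSC_top X vL) h' \<and>
                  (\<forall>x\<in>topspace X. h' (eval_map X vK x) = eval_map X vL x)
               \<longrightarrow> (\<forall>s\<in>BSC X vK. h' s = h s)))
       \<and> (\<forall>(vE :: 'E::field \<Rightarrow> real) (vk :: 'k::field \<Rightarrow> real) (\<iota> :: 'k \<Rightarrow> 'E).
            complete_valued_field vE \<and> complete_valued_field vk \<and>
            (\<forall>a b. \<iota> (a + b) = \<iota> a + \<iota> b) \<and> (\<forall>a b. \<iota> (a * b) = \<iota> a * \<iota> b) \<and>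
            \<iota> 1 = 1 \<and> (\<forall>a. vE (\<iota> a) = vk a)
          \<longrightarrow> homeomorphic_map (BSC_top X vE) (BSC_top X vk) (restr_map X vk \<iota>))"
proof (intro conjI allI impI)
  have abs_K: "nonarch_abs vK" and abs_L: "nonarch_abs vL"
    using assms by (simp_all add: complete_valued_field_def)
  have unique: "h' s = BSC_transfer X vL s"
    if "homeomorphic_map (BSC_top X vK) (BSC_top X vL) h'"
      and "\<forall>x\<in>topspace X. h' (eval_map X vK x) = eval_map X vL x" and "s \<in> BSC X vK" for h' s
    using that(2)
    by (intro BSC_transfer_unique[OF abs_K abs_L homeomorphic_imp_continuous_map[OF that(1)] _ that(3)]) auto
  show "\<exists>h. homeomorphic_map (BSC_top X vK) (BSC_top X vL) h \<and>
      (\<forall>x\<in>topspace X. h (eval_map X vK x) = eval_map X vL x) \<and>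
      (\<forall>h'. homeomorphic_map (BSC_top X vK) (BSC_top X vL) h' \<and>
          (\<forall>x\<in>topspace X. h' (eval_map X vK x) = eval_map X vL x)
        \<longrightarrow> (\<forall>s\<in>BSC X vK. h' s = h s))"
    using homeomorphic_map_BSC_transfer[OF abs_K abs_L] BSC_transfer_eval_map[OF abs_K abs_L] unique
    by (intro exI[of _ "BSC_transfer X vL"] conjI allI impI ballI) auto
next
  fix vE :: "'E::field \<Rightarrow> real" and vk :: "'k::field \<Rightarrow> real" and \<iota> :: "'k \<Rightarrow> 'E"
  assume "complete_valued_field vE \<and> complete_valued_field vk \<and>
      (\<forall>a b. \<iota> (a + b) = \<iota> a + \<iota> b) \<and> (\<forall>a b. \<iota> (a * b) = \<iota> a * \<iota> b) \<and>
      \<iota> 1 = 1 \<and> (\<forall>a. vE (\<iota> a) = vk a)"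
  then show "homeomorphic_map (BSC_top X vE) (BSC_top X vk) (restr_map X vk \<iota>)"
    by (intro homeomorphic_map_restr_map) (simp_all add: complete_valued_field_def)
qed

end
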